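(* Let $k,\ell\ge1$ and $\vec x=(x_1,\dots,x_k)$, $\vec y=(y_1,\dots,y_\ell)$ be distinct commuting formal variables. Then: (1) for $\sigma\in\Sigma_k$, $\tau\in\Sigma_\ell$ and $(r,\alpha,\beta)\in\tilde{\mathfrak S}$, $\Phi_{r,\alpha,\beta}(\sigma(\vec x),\tau(\vec y))=\Phi_{r,\alpha\circ\sigma^{-1},\beta\circ\tau^{-1}}(\vec x,\vec y)$; (2) distinct triples in $\tilde{\mathfrak S}$ give distinct vectors $\Phi_{r,\alpha,\beta}(\vec x,\vec y)$; (3) $\tilde{\mathfrak S}=\{(r,\alpha\circ\sigma,\beta\circ\tau):(r,\alpha,\beta)\in\mathfrak S,\sigma\in\Sigma_k,\tau\in\Sigma_\ell\}$; this gives natural actions of $\Sigma_k\times\Sigma_\ell$ on $\tilde{\mathfrak S}$ and on $\{\Phi_{r,\alpha,\beta}(\vec x,\vec y):(r,\alpha,\beta)\in\tilde{\mathfrak S}\}$ (via $(\sigma,\tau)\cdot\Phi_{r,\alpha,\beta}(\vec x,\vec y)=\Phi_{r,\alpha,\beta}(\sigma(\vec x),\tau(\vec y))$), and the latter action is free; (4) for fixed $r_0$ with $\max(k,\ell)\le r_0\le k+\ell$ and $\tilde{\mathfrak S}_{r_0}=\{(r,\alpha,\beta)\in\tilde{\mathfrak S}:r=r_0\}$, every $\pi\in\Sigma_{r_0}$ satisfies $\pi(\Phi_{r_0,\alpha,\beta}(\vec x,\vec y))=\Phi_{r_0,\pi^{-1}\circ\alpha,\pi^{-1}\circ\beta}(\vec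 x,\vec y)$, giving a natural action of $\Sigma_{r_0}$ on $\tilde{\mathfrak S}_{r_0}$, and this action is free; (5) for $(r,\alpha,\beta)\in\tilde{\mathfrak S}$ with $\Phi_{r,\alpha,\beta}(\vec x,\vec y)=(z_1,\dots,z_r)$ and $1\le r'\le r''\le r$, put $\vec r^\sharp=(r',r'+1,\dots,r'')$, $\vec z^\sharp=(z_{r'},\dots,z_{r''})$, $\vec k^\sharp=\alpha^{-1}(\vec r^\sharp)$, $\vec\ell^\sharp=\beta^{-1}(\vec r^\sharp)$, with $\vec x^\sharp,\vec y^\sharp$ the corresponding subvectors of $\vec x,\vec y$; then $\vec z^\sharp=\Phi_{r^\sharp,\alpha|_{\vec k^\sharp},\beta|_{\vec\ell^\sharp}}(\vec x^\sharp,\vec y^\sharp)$.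
   Context: $[n]=\{1,\dots,n\}$. $\mathfrak S$ is the set of triples $(r,\alpha,\beta)$ with $\max(k,\ell)\le r\le k+\ell$, $\alpha:[k]\to[r]$, $\beta:[\ell]\to[r]$ order-preserving injections with $\mathrm{im}\,\alpha\cup\mathrm{im}\,\beta=[r]$; $\tilde{\mathfrak S}$ is defined the same way but with $\alpha,\beta$ arbitrary injections. For such a triple, $\Phi_{r,\alpha,\beta}(\vec x,\vec y)=(x_{\alpha^{-1}(1)}y_{\beta^{-1}(1)},\dots,x_{\alpha^{-1}(r)}y_{\beta^{-1}(r)})$ with the convention $x_\emptyset=y_\emptyset=1$ (so the $u$-th entry is $x_i$, $y_j$ or the formal product $x_iy_j$). For $\sigma\in\Sigma_k$, $\sigma(\vec x)=(x_{\sigma(1)},\dots,x_{\sigma(k)})$, and for $\pi\in\Sigma_{r}$ acting on a vector $(z_1,\dots,z_r)$, $\pi(\vec z)=(z_{\pi(1)},\dots,z_{\pi(r)})$. For subvectors $\vec k^\sharp,\vec\ell^\sharp,\vec r^\sharp=(r_{i_1},\dots,r_{i_{p}})$ of $[k],[\ell],[r]$ with $\alpha(\vec k^\sharp)\cup\beta(\vec\ell^\sharp)=\vec r^\sharp$, $\Phi_{r^\sharp,\alpha|_{\vec k^\sharp},\beta|_{\vec\ell^\sharp}}(\vec x^\sharp,\vec y^\sharp)=(x_{\alpha^{-1}(r_{i_1})}y_{\beta^{-1}(r_{i_1})},\dots,x_{\alpha^{-1}(r_{i_p})}y_{\beta^{-1}(r_{i_p})})$. *)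

theory Defs
  imports "HOL-Library.FuncSet" "HOL-Library.Multiset" "HOL-Combinatorics.Permutations"
begin

text \<open>Formal variables: x_i is represented by Inl i, y_j by Inr j (all distinct).
  A formal commutative monomial is a multiset of variables; the empty multiset is 1.
  Injections alpha : [k] -> [r] are extensional functions (undefined outside [k]).\<close>

type_synonym var = "nat + nat"
type_synonym triple = "nat \<times> (nat \<Rightarrow> nat) \<times> (nat \<Rightarrow> nat)"

definition Stilde :: "nat \<Rightarrow> nat \<Rightarrow> triple set" where
  "Stilde k l = {(r, \<alpha>, \<beta>). max k l \<le> r \<and> r \<le> k + l
      \<and> \<alpha> \<in> {1..k} \<rightarrow>\<^sub>E {1..r} \<and> inj_on \<alpha> {1..k}
      \<and> \<beta> \<in> {1..l} \<rightarrow>\<^sub>E {1..r} \<and> inj_on \<beta> {1..l}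
      \<and> \<alpha> ` {1..k} \<union> \<beta> ` {1..l} = {1..r}}"

definition Sord :: "nat \<Rightarrow> nat \<Rightarrow> triple set" where
  "Sord k l = {(r, \<alpha>, \<beta>) \<in> Stilde k l.
      strict_mono_on {1..k} \<alpha> \<and> strict_mono_on {1..l} \<beta>}"

text \<open>General Phi on subvectors: K, L are the index sets of the subvectors of x and y,
  rs the list (r_{i_1},...,r_{i_p}); the entry at position u is x_{alpha^-1(u)} y_{beta^-1(u)}
  with x_empty = y_empty = 1.\<close>
definition Phi_sub :: "nat set \<Rightarrow> nat set \<Rightarrow> nat list \<Rightarrow> (nat \<Rightarrow> nat) \<Rightarrow> (nat \<Rightarrow> nat)
    \<Rightarrow> (nat \<Rightarrow> 'v) \<Rightarrow> (nat \<Rightarrow> 'v) \<Rightarrow> 'v multiset list" where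
  "Phi_sub K L rs \<alpha> \<beta> xs ys =
     map (\<lambda>u. image_mset xs (mset_set {i \<in> K. \<alpha> i = u})
             + image_mset ys (mset_set {j \<in> L. \<beta> j = u})) rs"

definition Phi :: "nat \<Rightarrow> nat \<Rightarrow> nat \<Rightarrow> (nat \<Rightarrow> nat) \<Rightarrow> (nat \<Rightarrow> nat)
    \<Rightarrow> (nat \<Rightarrow> 'v) \<Rightarrow> (nat \<Rightarrow> 'v) \<Rightarrow> 'v multiset list" where
  "Phi k l r \<alpha> \<beta> xs ys = Phi_sub {1..k} {1..l} [1..<Suc r] \<alpha> \<beta> xs ys"

definition permute_vec :: "(nat \<Rightarrow> nat) \<Rightarrow> 'a list \<Rightarrow> 'a list" where
  "permute_vec \<pi> zs = map (\<lambda>u. zs ! (\<pi> u - 1)) [1..<Suc (length zs)]"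

definition act2 :: "nat \<Rightarrow> nat \<Rightarrow> (nat \<Rightarrow> nat) \<Rightarrow> (nat \<Rightarrow> nat) \<Rightarrow> triple \<Rightarrow> triple" where
  "act2 k l \<sigma> \<tau> t = (case t of (r, \<alpha>, \<beta>) \<Rightarrow>
      (r, compose {1..k} \<alpha> (inv \<sigma>), compose {1..l} \<beta> (inv \<tau>)))"

definition actr :: "nat \<Rightarrow> nat \<Rightarrow> (nat \<Rightarrow> nat) \<Rightarrow> triple \<Rightarrow> triple" where
  "actr k l \<pi> t = (case t of (r, \<alpha>, \<beta>) \<Rightarrow>
      (r, compose {1..k} (inv \<pi>) \<alpha>, compose {1..l} (inv \<pi>) \<beta>))"

end

theory Submission
  imports Defs
begin

text \<open>The u-th entry of \<open>Phi k l r \<alpha> \<beta> x y\<close> is the monomial of the variables in the fibres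
  \<open>\<alpha>\<^sup>-\<^sup>1(u)\<close> and \<open>\<beta>\<^sup>-\<^sup>1(u)\<close>. Because the variables are distinct, the vector determines
  r (its length) and \<alpha>, \<beta> (\<open>x\<^sub>i\<close> sits in entry \<open>\<alpha> i\<close>), which is (2). Renaming the variables by
  \<open>(\<sigma>, \<tau>)\<close> or permuting the entries by \<open>\<pi>\<close> merely transports the fibres, giving the formulas
  of (1) and (4); freeness then follows from (2), the injectivity of \<alpha>, \<beta> and the covering
  condition \<open>im \<alpha> \<union> im \<beta> = [r]\<close>. For (3), an injection \<open>[k] \<rightarrow> [r]\<close> is the order-preserving
  enumeration of its image composed with a permutation of \<open>[k]\<close>. Part (5) holds entrywise,
  since an entry only depends on the fibres over its own position.\<close>

declare One_nat_def [simp del] \<comment> \<open>keeps \<open>{1..k}\<close> in the shape the lemmas below are stated in\<close>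

lemma mem_Stilde:
  "(r, \<alpha>, \<beta>) \<in> Stilde k l \<longleftrightarrow> max k l \<le> r \<and> r \<le> k + l
      \<and> \<alpha> \<in> {1..k} \<rightarrow>\<^sub>E {1..r} \<and> inj_on \<alpha> {1..k}
      \<and> \<beta> \<in> {1..l} \<rightarrow>\<^sub>E {1..r} \<and> inj_on \<beta> {1..l}
      \<and> \<alpha> ` {1..k} \<union> \<beta> ` {1..l} = {1..r}"
  by (simp add: Stilde_def)

lemma length_Phi [simp]: "length (Phi k l r \<alpha> \<beta> xs ys) = r"
  by (simp add: Phi_def Phi_sub_def)

lemma nth_Phi:
  assumes "u \<in> {1..r}"
  shows "Phi k l r \<alpha> \<beta> xs ys ! (u - 1) =
    image_mset xs (mset_set {i \<in> {1..k}. \<alpha> i = u}) + image_mset ys (mset_set {j \<in> {1..l}. \<beta> j = u})"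
proof -
  have "u - 1 < length [1..<Suc r]" and "[1..<Suc r] ! (u - 1) = u"
    using assms by (auto simp del: upt_Suc)
  then show ?thesis by (simp only: Phi_def Phi_sub_def nth_map)
qed

lemma Phi_sub_cong:
  assumes "\<And>u. u \<in> set rs \<Longrightarrow> {i \<in> K. \<alpha> i = u} = {i \<in> K'. \<alpha>' i = u}"
    and "\<And>u. u \<in> set rs \<Longrightarrow> {j \<in> L. \<beta> j = u} = {j \<in> L'. \<beta>' j = u}"
  shows "Phi_sub K L rs \<alpha> \<beta> xs ys = Phi_sub K' L' rs \<alpha>' \<beta>' xs ys"
  using assms by (simp add: Phi_sub_def)

lemma fiber_compose_inv_permutes:
  assumes "\<sigma> permutes A"
  shows "{i \<in> A. compose A \<alpha> (inv \<sigma>) i = u} = \<sigma> ` {i \<in> A. \<alpha> i = u}"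
proof -
  have "{i \<in> A. compose A \<alpha> (inv \<sigma>) i = u} = {i \<in> A. \<alpha> (inv \<sigma> i) = u}"
    by (auto simp: compose_eq)
  also have "\<dots> = \<sigma> ` {i \<in> A. \<alpha> i = u}"
    using assms permutes_inv[OF assms]
    by (auto simp: permutes_in_image permutes_inverses intro!: image_eqI[where x = "inv \<sigma> _"])
  finally show ?thesis .
qed

lemma fiber_inv_permutes_compose:
  assumes "\<pi> permutes B"
  shows "{i \<in> A. compose A (inv \<pi>) \<alpha> i = u} = {i \<in> A. \<alpha> i = \<pi> u}"
  using assms by (auto simp: compose_eq permutes_inv_eq permutes_inverses)

lemma compose_permutes_PiE:
  assumes "\<sigma> permutes A" and "\<alpha> \<in> A \<rightarrow>\<^sub>E B"
  shows "compose A \<alpha> \<sigma> \<in> A \<rightarrow>\<^sub>E B"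
  using assms by (auto simp: compose_def permutes_in_image)

lemma compose_permutes_image:
  assumes "\<sigma> permutes A"
  shows "compose A \<alpha> \<sigma> ` A = \<alpha> ` A"
  using assms by (simp add: surj_compose permutes_image)

lemma inj_on_compose_permutes:
  assumes "\<sigma> permutes A" and "inj_on \<alpha> A"
  shows "inj_on (compose A \<alpha> \<sigma>) A"
  using inj_on_compose[OF permutes_imp_bij] assms .

lemma permutes_compose_PiE:
  assumes "\<pi> permutes B" and "\<alpha> \<in> A \<rightarrow>\<^sub>E B"
  shows "compose A \<pi> \<alpha> \<in> A \<rightarrow>\<^sub>E B"
  using assms by (auto simp: compose_def permutes_in_image)

lemma inj_on_permutes_compose:
  assumes "\<pi> permutes B" and "inj_on \<alpha> A"
  shows "inj_on (compose A \<pi> \<alpha>) A"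
  using assms by (auto simp: inj_on_def compose_eq permutes_inj[THEN inj_eq])

lemma compose_compose_right:
  assumes "h ` A \<subseteq> A"
  shows "compose A (compose A g f) h = compose A g (f \<circ> h)"
  using assms by (auto simp: compose_def fun_eq_iff)

lemma compose_compose_left: "compose A f (compose A g h) = compose A (f \<circ> g) h"
  by (simp add: compose_def fun_eq_iff)

lemma permutes_eq_id_if_inv_fixes:
  assumes "p permutes A" and "\<And>x. x \<in> A \<Longrightarrow> inv p x = x"
  shows "p = id"
proof
  fix x show "p x = id x"
    using assms permutes_inverses(1)[OF assms(1), of x] permutes_not_in[OF assms(1), of x]
    by (cases "x \<in> A") auto
qed

lemma permutes_eq_id_if_compose_inv_eq:
  assumes \<sigma>: "\<sigma> permutes A" and inj: "inj_on \<alpha> A" and fixed: "compose A \<alpha> (inv \<sigma>) = \<alpha>"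
  shows "\<sigma> = id"
proof (rule permutes_eq_id_if_inv_fixes[OF \<sigma>])
  fix x assume x: "x \<in> A"
  then have "inv \<sigma> x \<in> A" using permutes_inv[OF \<sigma>] by (simp add: permutes_in_image)
  moreover have "\<alpha> (inv \<sigma> x) = \<alpha> x" using fun_cong[OF fixed, of x] x by (simp add: compose_eq)
  ultimately show "inv \<sigma> x = x" using inj x by (auto dest: inj_onD)
qed

lemma obtain_strict_mono_enumeration:
  fixes A :: "'a::linorder set"
  assumes "finite A" and "card A = k"
  obtains e where "e \<in> extensional {1..k}" "strict_mono_on {1..k} e" "bij_betw e {1..k} A"
proof -
  define s where "s = sorted_list_of_set A"
  have s: "sorted_wrt (<) s" "length s = k" "set s = A"
    using assms by (simp_all add: s_def)
  define e where "e = (\<lambda>i\<in>{1..k}. s ! (i - 1))"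
  have "strict_mono_on {1..k} e"
  proof (rule strict_mono_onI)
    fix i j assume "i \<in> {1..k}" "j \<in> {1..k}" "i < j"
    then show "e i < e j"
      using sorted_wrt_nth_less[OF s(1), of "i - 1" "j - 1"] s(2) by (simp add: e_def)
  qed
  moreover have "bij_betw e {1..k} A"
  proof -
    have "bij_betw (\<lambda>i. i - 1) {1..k} {..<k}"
      by (rule bij_betw_byWitness[where f' = Suc]) auto
    moreover have "bij_betw ((!) s) {..<k} A"
      using s by (intro bij_betw_nth) (simp_all add: strict_sorted_iff)
    ultimately have "bij_betw ((!) s \<circ> (\<lambda>i. i - 1)) {1..k} A"
      by (rule bij_betw_trans)
    then show ?thesis
      by (rule bij_betw_cong[THEN iffD1, rotated]) (simp add: e_def)
  qed
  moreover have "e \<in> extensional {1..k}"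
    by (simp add: e_def)
  ultimately show ?thesis
    using that by blast
qed

lemma PiE_inj_decompose_strict_mono:
  fixes \<alpha> :: "nat \<Rightarrow> 'a::linorder"
  assumes \<alpha>: "\<alpha> \<in> {1..k} \<rightarrow>\<^sub>E B" and inj: "inj_on \<alpha> {1..k}"
  obtains \<alpha>' \<sigma> where "\<alpha>' \<in> {1..k} \<rightarrow>\<^sub>E B" "strict_mono_on {1..k} \<alpha>'"
    "\<alpha>' ` {1..k} = \<alpha> ` {1..k}" "\<sigma> permutes {1..k}" "\<alpha> = compose {1..k} \<alpha>' \<sigma>"
proof -
  obtain \<alpha>' where ext: "\<alpha>' \<in> extensional {1..k}" and mono: "strict_mono_on {1..k} \<alpha>'"
    and bij': "bij_betw \<alpha>' {1..k} (\<alpha> ` {1..k})"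
    using obtain_strict_mono_enumeration[of "\<alpha> ` {1..k}" k] inj by (auto simp: card_image)
  define \<sigma> where "\<sigma> = (\<lambda>i. if i \<in> {1..k} then inv_into {1..k} \<alpha>' (\<alpha> i) else i)"
  have "bij_betw (inv_into {1..k} \<alpha>' \<circ> \<alpha>) {1..k} {1..k}"
    by (rule bij_betw_trans[OF inj_on_imp_bij_betw[OF inj] bij_betw_inv_into[OF bij']])
  then have "bij_betw \<sigma> {1..k} {1..k}"
    by (rule bij_betw_cong[THEN iffD1, rotated]) (simp add: \<sigma>_def)
  then have \<sigma>: "\<sigma> permutes {1..k}"
    by (rule bij_imp_permutes) (simp add: \<sigma>_def del: atLeastAtMost_iff)
  have "\<alpha>' ` {1..k} \<subseteq> B"
    using \<alpha> bij' by (auto simp: bij_betw_def)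
  with ext have \<alpha>': "\<alpha>' \<in> {1..k} \<rightarrow>\<^sub>E B"
    by (auto simp: PiE_iff)
  have "\<alpha> = compose {1..k} \<alpha>' \<sigma>"
  proof (rule PiE_ext[OF \<alpha> compose_permutes_PiE[OF \<sigma> \<alpha>']])
    fix i assume "i \<in> {1..k}"
    then show "\<alpha> i = compose {1..k} \<alpha>' \<sigma> i"
      using bij' by (simp add: compose_eq \<sigma>_def f_inv_into_f bij_betw_def)
  qed
  with that \<alpha>' mono \<sigma> bij' show ?thesis
    by (simp add: bij_betw_def)
qed

lemma Stilde_compose_permutes:
  assumes "(r, \<alpha>, \<beta>) \<in> Stilde k l" and "\<sigma> permutes {1..k}" and "\<tau> permutes {1..l}"
  shows "(r, compose {1..k} \<alpha> \<sigma>, compose {1..l} \<beta> \<tau>) \<in> Stilde k l"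
  using assms by (simp add: mem_Stilde compose_permutes_PiE compose_permutes_image inj_on_compose_permutes)

lemma Stilde_permutes_compose:
  assumes "(r, \<alpha>, \<beta>) \<in> Stilde k l" and "\<pi> permutes {1..r}"
  shows "(r, compose {1..k} \<pi> \<alpha>, compose {1..l} \<pi> \<beta>) \<in> Stilde k l"
proof -
  have "compose {1..k} \<pi> \<alpha> ` {1..k} \<union> compose {1..l} \<pi> \<beta> ` {1..l} = \<pi> ` (\<alpha> ` {1..k} \<union> \<beta> ` {1..l})"
    by (auto simp: compose_eq)
  with assms show ?thesis
    by (simp add: mem_Stilde permutes_compose_PiE inj_on_permutes_compose permutes_image)
qed

lemma Phi_sub_relabel:
  assumes "\<sigma> permutes K" and "\<tau> permutes L"
  shows "Phi_sub K L rs \<alpha> \<beta> (\<lambda>i. xs (\<sigma> i)) (\<lambda>j. ys (\<tau> j))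
       = Phi_sub K L rs (compose K \<alpha> (inv \<sigma>)) (compose L \<beta> (inv \<tau>)) xs ys"
proof -
  have "image_mset (\<lambda>i. f (\<rho> i)) (mset_set F) = image_mset f (mset_set (\<rho> ` F))"
    if "\<rho> permutes A" for f :: "nat \<Rightarrow> 'a" and \<rho> A F
    using permutes_inj_on[OF that] by (simp flip: image_mset_mset_set add: multiset.map_comp comp_def)
  then show ?thesis
    using assms by (simp add: Phi_sub_def fiber_compose_inv_permutes)
qed

lemma Phi_relabel:
  assumes "\<sigma> permutes {1..k}" and "\<tau> permutes {1..l}"
  shows "Phi k l r \<alpha> \<beta> (\<lambda>i. xs (\<sigma> i)) (\<lambda>j. ys (\<tau> j))
       = Phi k l r (compose {1..k} \<alpha> (inv \<sigma>)) (compose {1..l} \<beta> (inv \<tau>)) xs ys"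
  unfolding Phi_def by (rule Phi_sub_relabel[OF assms])

lemma Inl_mem_nth_Phi:
  assumes "u \<in> {1..r}" and "i \<in> {1..k}"
  shows "Inl i \<in># Phi k l r \<alpha> \<beta> Inl Inr ! (u - 1) \<longleftrightarrow> \<alpha> i = u"
  unfolding nth_Phi[OF assms(1)] using assms(2) by auto

lemma Inr_mem_nth_Phi:
  assumes "u \<in> {1..r}" and "j \<in> {1..l}"
  shows "Inr j \<in># Phi k l r \<alpha> \<beta> Inl Inr ! (u - 1) \<longleftrightarrow> \<beta> j = u"
  unfolding nth_Phi[OF assms(1)] using assms(2) by auto

lemma Phi_Inl_Inr_eqD:
  assumes "Phi k l r \<alpha> \<beta> Inl Inr = Phi k l r \<alpha>' \<beta>' Inl Inr"
    and "\<alpha> \<in> {1..k} \<rightarrow>\<^sub>E {1..r}" "\<alpha>' \<in> {1..k} \<rightarrow>\<^sub>E {1..r}"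
    and "\<beta> \<in> {1..l} \<rightarrow>\<^sub>E {1..r}" "\<beta>' \<in> {1..l} \<rightarrow>\<^sub>E {1..r}"
  shows "\<alpha> = \<alpha>'" and "\<beta> = \<beta>'"
proof -
  show "\<alpha> = \<alpha>'"
  proof (rule PiE_ext[OF assms(2,3)])
    fix i assume i: "i \<in> {1..k}"
    then have "\<alpha> i \<in> {1..r}" using assms(2) by auto
    then show "\<alpha> i = \<alpha>' i"
      using Inl_mem_nth_Phi[OF _ i, of _ r l] assms(1) by metis
  qed
  show "\<beta> = \<beta>'"
  proof (rule PiE_ext[OF assms(4,5)])
    fix j assume j: "j \<in> {1..l}"
    then have "\<beta> j \<in> {1..r}" using assms(4) by auto
    then show "\<beta> j = \<beta>' j"
      using Inr_mem_nth_Phi[OF _ j, of _ r k] assms(1) by metis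
  qed
qed

lemma Stilde_eq_if_Phi_eq:
  assumes "(r, \<alpha>, \<beta>) \<in> Stilde k l" "(r', \<alpha>', \<beta>') \<in> Stilde k l"
    and E: "Phi k l r \<alpha> \<beta> (Inl :: nat \<Rightarrow> var) Inr = Phi k l r' \<alpha>' \<beta>' Inl Inr"
  shows "(r, \<alpha>, \<beta>) = (r', \<alpha>', \<beta>')"
proof -
  have "r = r'" using arg_cong[OF E, of length] by simp
  with assms show ?thesis
    using Phi_Inl_Inr_eqD[of k l r \<alpha> \<beta> \<alpha>' \<beta>'] by (simp add: mem_Stilde)
qed

lemma inj_on_Phi_Stilde: "inj_on (\<lambda>(r, \<alpha>, \<beta>). Phi k l r \<alpha> \<beta> (Inl :: nat \<Rightarrow> var) Inr) (Stilde k l)"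
  by (auto simp: inj_on_def dest: Stilde_eq_if_Phi_eq)

lemma Stilde_eq_Sord_orbits:
  "Stilde k l = {(r, compose {1..k} \<alpha> \<sigma>, compose {1..l} \<beta> \<tau>) | r \<alpha> \<beta> \<sigma> \<tau>.
      (r, \<alpha>, \<beta>) \<in> Sord k l \<and> \<sigma> permutes {1..k} \<and> \<tau> permutes {1..l}}" (is "_ = ?orbits")
proof (intro set_eqI iffI)
  fix t assume "t \<in> Stilde k l"
  then obtain r \<alpha> \<beta> where t: "t = (r, \<alpha>, \<beta>)" and S: "(r, \<alpha>, \<beta>) \<in> Stilde k l"
    by (cases t) auto
  then have \<alpha>: "\<alpha> \<in> {1..k} \<rightarrow>\<^sub>E {1..r}" "inj_on \<alpha> {1..k}"
    and \<beta>: "\<beta> \<in> {1..l} \<rightarrow>\<^sub>E {1..r}" "inj_on \<beta> {1..l}"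
    by (simp_all add: mem_Stilde)
  obtain \<alpha>' \<sigma> where \<alpha>': "\<alpha>' \<in> {1..k} \<rightarrow>\<^sub>E {1..r}" "strict_mono_on {1..k} \<alpha>'"
    "\<alpha>' ` {1..k} = \<alpha> ` {1..k}" "\<sigma> permutes {1..k}" "\<alpha> = compose {1..k} \<alpha>' \<sigma>"
    using PiE_inj_decompose_strict_mono[OF \<alpha>] .
  obtain \<beta>' \<tau> where \<beta>': "\<beta>' \<in> {1..l} \<rightarrow>\<^sub>E {1..r}" "strict_mono_on {1..l} \<beta>'"
    "\<beta>' ` {1..l} = \<beta> ` {1..l}" "\<tau> permutes {1..l}" "\<beta> = compose {1..l} \<beta>' \<tau>"
    using PiE_inj_decompose_strict_mono[OF \<beta>] .
  have "(r, \<alpha>', \<beta>') \<in> Sord k l"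
    using S \<alpha>' \<beta>' by (simp add: Sord_def mem_Stilde strict_mono_on_imp_inj_on)
  with t \<alpha>'(4,5) \<beta>'(4,5) show "t \<in> ?orbits"
    by blast
next
  fix t assume "t \<in> ?orbits"
  then show "t \<in> Stilde k l"
    by (auto simp: Sord_def intro: Stilde_compose_permutes)
qed

lemma act2_id:
  assumes "t \<in> Stilde k l"
  shows "act2 k l id id t = t"
  using assms by (cases t) (auto simp: act2_def compose_def mem_Stilde)

lemma act2_act2:
  assumes "\<sigma>1 permutes {1..k}" "\<tau>1 permutes {1..l}" "\<sigma>2 permutes {1..k}" "\<tau>2 permutes {1..l}"
  shows "act2 k l \<sigma>1 \<tau>1 (act2 k l \<sigma>2 \<tau>2 t) = act2 k l (\<sigma>1 \<circ> \<sigma>2) (\<tau>1 \<circ> \<tau>2) t"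
  using assms
  by (cases t) (simp add: act2_def compose_compose_right permutes_image permutes_inv o_inv_distrib permutes_bij)

lemma Stilde_act2:
  assumes "\<sigma> permutes {1..k}" "\<tau> permutes {1..l}" "t \<in> Stilde k l"
  shows "act2 k l \<sigma> \<tau> t \<in> Stilde k l"
  using assms by (cases t) (simp add: act2_def Stilde_compose_permutes permutes_inv)

lemma Phi_compose_inv_eq_imp_id:
  assumes \<sigma>: "\<sigma> permutes {1..k}" and \<tau>: "\<tau> permutes {1..l}" and S: "(r, \<alpha>, \<beta>) \<in> Stilde k l"
    and E: "Phi k l r (compose {1..k} \<alpha> (inv \<sigma>)) (compose {1..l} \<beta> (inv \<tau>)) (Inl :: nat \<Rightarrow> var) Inr
      = Phi k l r \<alpha> \<beta> Inl Inr"
  shows "\<sigma> = id \<and> \<tau> = id"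
proof -
  have "(r, compose {1..k} \<alpha> (inv \<sigma>), compose {1..l} \<beta> (inv \<tau>)) = (r, \<alpha>, \<beta>)"
    using Stilde_compose_permutes[OF S permutes_inv[OF \<sigma>] permutes_inv[OF \<tau>]] S E
    by (rule Stilde_eq_if_Phi_eq)
  then have "compose {1..k} \<alpha> (inv \<sigma>) = \<alpha>" and "compose {1..l} \<beta> (inv \<tau>) = \<beta>"
    by simp_all
  moreover have "inj_on \<alpha> {1..k}" and "inj_on \<beta> {1..l}"
    using S by (simp_all add: mem_Stilde)
  ultimately show ?thesis
    using permutes_eq_id_if_compose_inv_eq[OF \<sigma>] permutes_eq_id_if_compose_inv_eq[OF \<tau>] by blast
qed

lemma permute_vec_Phi:
  assumes "\<pi> permutes {1..r}"
  shows "permute_vec \<pi> (Phi k l r \<alpha> \<beta> xs ys)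
       = Phi k l r (compose {1..k} (inv \<pi>) \<alpha>) (compose {1..l} (inv \<pi>) \<beta>) xs ys"
  unfolding permute_vec_def length_Phi
proof (simp only: Phi_def[of k l r "compose {1..k} (inv \<pi>) \<alpha>"] Phi_sub_def, rule map_cong[OF refl])
  fix u assume "u \<in> set [1..<Suc r]"
  then have \<pi>u: "\<pi> u \<in> {1..r}" using assms by (simp only: permutes_in_image) auto
  show "Phi k l r \<alpha> \<beta> xs ys ! (\<pi> u - 1) =
      image_mset xs (mset_set {i \<in> {1..k}. compose {1..k} (inv \<pi>) \<alpha> i = u}) +
      image_mset ys (mset_set {j \<in> {1..l}. compose {1..l} (inv \<pi>) \<beta> j = u})"
    unfolding nth_Phi[OF \<pi>u] fiber_inv_permutes_compose[OF assms] ..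
qed

lemma fst_actr [simp]: "fst (actr k l \<pi> t) = fst t"
  by (cases t) (simp add: actr_def)

lemma actr_id:
  assumes "t \<in> Stilde k l"
  shows "actr k l id t = t"
  using assms by (cases t) (auto simp: actr_def compose_def mem_Stilde)

lemma actr_actr:
  assumes "\<pi>1 permutes A" and "\<pi>2 permutes A"
  shows "actr k l \<pi>1 (actr k l \<pi>2 t) = actr k l (\<pi>2 \<circ> \<pi>1) t"
  using assms by (cases t) (simp add: actr_def compose_compose_left o_inv_distrib permutes_bij)

lemma Stilde_actr:
  assumes "\<pi> permutes {1..r}" and "(r, \<alpha>, \<beta>) \<in> Stilde k l"
  shows "actr k l \<pi> (r, \<alpha>, \<beta>) \<in> Stilde k l"
  using assms by (simp add: actr_def Stilde_permutes_compose permutes_inv)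

lemma actr_fixed_imp_id:
  assumes \<pi>: "\<pi> permutes {1..r}" and S: "(r, \<alpha>, \<beta>) \<in> Stilde k l"
    and fixed: "actr k l \<pi> (r, \<alpha>, \<beta>) = (r, \<alpha>, \<beta>)"
  shows "\<pi> = id"
proof -
  have "compose {1..k} (inv \<pi>) \<alpha> = \<alpha>" and "compose {1..l} (inv \<pi>) \<beta> = \<beta>"
    using fixed by (simp_all add: actr_def)
  then have "inv \<pi> u = u" if "u \<in> \<alpha> ` {1..k} \<union> \<beta> ` {1..l}" for u
    using that by (auto simp: compose_def fun_eq_iff split: if_splits)
  moreover have "\<alpha> ` {1..k} \<union> \<beta> ` {1..l} = {1..r}"
    using S by (simp add: mem_Stilde)
  ultimately show ?thesis
    using permutes_eq_id_if_inv_fixes[OF \<pi>] by blast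
qed

lemma take_drop_Phi:
  assumes "1 \<le> r'" and "r' \<le> r''" and "r'' \<le> r"
  shows "take (Suc r'' - r') (drop (r' - 1) (Phi k l r \<alpha> \<beta> xs ys))
       = Phi_sub {1..k} {1..l} [r'..<Suc r''] \<alpha> \<beta> xs ys"
proof -
  have "take (Suc r'' - r') (drop (r' - 1) [1..<Suc r]) = [r'..<Suc r'']"
    using assms by (simp del: upt_Suc)
  then show ?thesis
    by (simp only: Phi_def Phi_sub_def drop_map take_map)
qed

lemma Phi_sub_restrict_preimage:
  fixes K L :: "nat set" and \<alpha> \<beta> :: "nat \<Rightarrow> nat" and rs :: "nat list"
  defines "K' \<equiv> {i \<in> K. \<alpha> i \<in> set rs}" and "L' \<equiv> {j \<in> L. \<beta> j \<in> set rs}"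
  shows "Phi_sub K L rs \<alpha> \<beta> xs ys = Phi_sub K' L' rs (restrict \<alpha> K') (restrict \<beta> L') xs ys"
  by (rule Phi_sub_cong) (auto simp: K'_def L'_def)

lemma image_restrict_preimage_Un:
  fixes \<alpha> :: "'a \<Rightarrow> 'c" and \<beta> :: "'b \<Rightarrow> 'c"
  assumes "\<alpha> ` K \<union> \<beta> ` L = R" and "S \<subseteq> R"
  defines "K' \<equiv> {i \<in> K. \<alpha> i \<in> S}" and "L' \<equiv> {j \<in> L. \<beta> j \<in> S}"
  shows "restrict \<alpha> K' ` K' \<union> restrict \<beta> L' ` L' = S"
  using assms by auto

lemma Phi_window:
  assumes "(r, \<alpha>, \<beta>) \<in> Stilde k l" and window: "1 \<le> r'" "r' \<le> r''" "r'' \<le> r"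
  defines "K \<equiv> {i \<in> {1..k}. \<alpha> i \<in> set [r'..<Suc r'']}"
    and "L \<equiv> {j \<in> {1..l}. \<beta> j \<in> set [r'..<Suc r'']}"
  shows "restrict \<alpha> K ` K \<union> restrict \<beta> L ` L = set [r'..<Suc r'']"
    and "take (Suc r'' - r') (drop (r' - 1) (Phi k l r \<alpha> \<beta> xs ys))
       = Phi_sub K L [r'..<Suc r''] (restrict \<alpha> K) (restrict \<beta> L) xs ys"
proof -
  have "\<alpha> ` {1..k} \<union> \<beta> ` {1..l} = {1..r}" using assms(1) by (simp add: mem_Stilde)
  moreover have "set [r'..<Suc r''] \<subseteq> {1..r}" using window by auto
  ultimately show "restrict \<alpha> K ` K \<union> restrict \<beta> L ` L = set [r'..<Suc r'']"
    unfolding K_def L_def by (rule image_restrict_preimage_Un)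
  show "take (Suc r'' - r') (drop (r' - 1) (Phi k l r \<alpha> \<beta> xs ys))
      = Phi_sub K L [r'..<Suc r''] (restrict \<alpha> K) (restrict \<beta> L) xs ys"
    unfolding take_drop_Phi[OF window] K_def L_def by (rule Phi_sub_restrict_preimage)
qed

theorem lemma6p2:
  fixes k l :: nat
  assumes "k \<ge> 1" and "l \<ge> 1"
  shows
  \<comment> \<open>(1)\<close>
  "(\<forall>\<sigma> \<tau> r \<alpha> \<beta>. \<sigma> permutes {1..k} \<longrightarrow> \<tau> permutes {1..l} \<longrightarrow> (r, \<alpha>, \<beta>) \<in> Stilde k l \<longrightarrow>
      Phi k l r \<alpha> \<beta> (\<lambda>i. Inl (\<sigma> i) :: var) (\<lambda>j. Inr (\<tau> j))
      = Phi k l r (compose {1..k} \<alpha> (inv \<sigma>)) (compose {1..l} \<beta> (inv \<tau>)) Inl Inr)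
   \<comment> \<open>(2)\<close>
   \<and> inj_on (\<lambda>(r, \<alpha>, \<beta>). Phi k l r \<alpha> \<beta> (Inl :: nat \<Rightarrow> var) Inr) (Stilde k l)
   \<comment> \<open>(3)\<close>
   \<and> Stilde k l = {(r, compose {1..k} \<alpha> \<sigma>, compose {1..l} \<beta> \<tau>) | r \<alpha> \<beta> \<sigma> \<tau>.
        (r, \<alpha>, \<beta>) \<in> Sord k l \<and> \<sigma> permutes {1..k} \<and> \<tau> permutes {1..l}}
   \<and> (\<forall>\<sigma> \<tau> t. \<sigma> permutes {1..k} \<longrightarrow> \<tau> permutes {1..l} \<longrightarrow> t \<in> Stilde k l \<longrightarrow>
        act2 k l \<sigma> \<tau> t \<in> Stilde k l)
   \<and> (\<forall>t \<in> Stilde k l. act2 k l id id t = t)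
   \<and> (\<forall>\<sigma>1 \<tau>1 \<sigma>2 \<tau>2 t. \<sigma>1 permutes {1..k} \<longrightarrow> \<tau>1 permutes {1..l} \<longrightarrow>
        \<sigma>2 permutes {1..k} \<longrightarrow> \<tau>2 permutes {1..l} \<longrightarrow> t \<in> Stilde k l \<longrightarrow>
        act2 k l \<sigma>1 \<tau>1 (act2 k l \<sigma>2 \<tau>2 t) = act2 k l (\<sigma>1 \<circ> \<sigma>2) (\<tau>1 \<circ> \<tau>2) t)
   \<and> (\<forall>\<sigma> \<tau> r \<alpha> \<beta>. \<sigma> permutes {1..k} \<longrightarrow> \<tau> permutes {1..l} \<longrightarrow> (r, \<alpha>, \<beta>) \<in> Stilde k l \<longrightarrow>
        (\<exists>(r', \<alpha>', \<beta>') \<in> Stilde k l.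
           Phi k l r \<alpha> \<beta> (\<lambda>i. Inl (\<sigma> i) :: var) (\<lambda>j. Inr (\<tau> j)) = Phi k l r' \<alpha>' \<beta>' Inl Inr))
   \<and> (\<forall>\<sigma> \<tau> r \<alpha> \<beta>. \<sigma> permutes {1..k} \<longrightarrow> \<tau> permutes {1..l} \<longrightarrow> (r, \<alpha>, \<beta>) \<in> Stilde k l \<longrightarrow>
        Phi k l r \<alpha> \<beta> (\<lambda>i. Inl (\<sigma> i) :: var) (\<lambda>j. Inr (\<tau> j)) = Phi k l r \<alpha> \<beta> Inl Inr \<longrightarrow>
        \<sigma> = id \<and> \<tau> = id)
   \<comment> \<open>(4)\<close>
   \<and> (\<forall>r0. max k l \<le> r0 \<and> r0 \<le> k + l \<longrightarrow>
        (\<forall>\<pi> \<alpha> \<beta>. \<pi> permutes {1..r0} \<longrightarrow> (r0, \<alpha>, \<beta>) \<in> Stilde k l \<longrightarrow>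
            permute_vec \<pi> (Phi k l r0 \<alpha> \<beta> (Inl :: nat \<Rightarrow> var) Inr)
            = Phi k l r0 (compose {1..k} (inv \<pi>) \<alpha>) (compose {1..l} (inv \<pi>) \<beta>) Inl Inr)
      \<and> (\<forall>\<pi> t. \<pi> permutes {1..r0} \<longrightarrow> t \<in> Stilde k l \<longrightarrow> fst t = r0 \<longrightarrow>
            actr k l \<pi> t \<in> Stilde k l \<and> fst (actr k l \<pi> t) = r0)
      \<and> (\<forall>t. t \<in> Stilde k l \<longrightarrow> fst t = r0 \<longrightarrow> actr k l id t = t)
      \<and> (\<forall>\<pi>1 \<pi>2 t. \<pi>1 permutes {1..r0} \<longrightarrow> \<pi>2 permutes {1..r0} \<longrightarrow> t \<in> Stilde k l \<longrightarrow>
            fst t = r0 \<longrightarrow> actr k l \<pi>1 (actr k l \<pi>2 t) = actr k l (\<pi>2 \<circ> \<pi>1) t)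
      \<and> (\<forall>\<pi> t. \<pi> permutes {1..r0} \<longrightarrow> t \<in> Stilde k l \<longrightarrow> fst t = r0 \<longrightarrow>
            actr k l \<pi> t = t \<longrightarrow> \<pi> = id))
   \<comment> \<open>(5)\<close>
   \<and> (\<forall>r \<alpha> \<beta> r' r''. (r, \<alpha>, \<beta>) \<in> Stilde k l \<longrightarrow> 1 \<le> r' \<longrightarrow> r' \<le> r'' \<longrightarrow> r'' \<le> r \<longrightarrow>
        (let zs = Phi k l r \<alpha> \<beta> (Inl :: nat \<Rightarrow> var) Inr;
             rs = [r'..<Suc r''];
             K = {i \<in> {1..k}. \<alpha> i \<in> set rs};
             L = {j \<in> {1..l}. \<beta> j \<in> set rs}
         in restrict \<alpha> K ` K \<union> restrict \<beta> L ` L = set rs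
            \<and> take (Suc r'' - r') (drop (r' - 1) zs)
              = Phi_sub K L rs (restrict \<alpha> K) (restrict \<beta> L) Inl Inr))"
  unfolding Let_def
  by (intro conjI allI impI ballI inj_on_Phi_Stilde Stilde_eq_Sord_orbits Phi_window;
      (simp only: split_paired_all)?)
    \<comment> \<open>simplifying with \<open>Phi_relabel\<close> puts the freeness premise into the form of \<open>Phi_compose_inv_eq_imp_id\<close>\<close>
    (auto simp: Phi_relabel Stilde_act2 act2_id act2_act2 permute_vec_Phi
      Stilde_actr actr_id actr_actr actr_fixed_imp_id
      dest: Phi_compose_inv_eq_imp_id intro!: bexI[OF _ Stilde_compose_permutes] permutes_inv)

end
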